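(* For any prime $p$, coefficientwise in $\mathbb{Z}[\![t]\!]$, \[ U(t) \equiv \Big( \sum_{m=0}^{[p/6]} u_{m} t^{m} \Big) U(t^{p}) \pmod{p},\qquad V(t) \equiv \Big( \sum_{m=0}^{[p/6]} (6m+1) u_{m} t^{m} \Big) U(t^{p}) \pmod{p}. \] In particular, $u_{r} \equiv 0\pmod{p}$ for all $r\ge1$ and $p\in \{2, 3, 5\}$.
   Context: For $r\ge0$ let $u_{r} = \frac{(6r)!}{(3r)!\, r!^{3}} = \binom{2r}{r} \binom{3r}{r} \binom{6r}{3r}$, and let $U(t)=\sum_{r\ge0}u_rt^r = {}_{3}F_{2}(\tfrac16,\tfrac12,\tfrac56;1,1;1728t)$ and $V(t)=\sum_{r\ge0}(6r+1)u_rt^r=(1+6t\tfrac{d}{dt})U(t)$. $[x]$ is the integer part. A congruence of formal power series modulo $N$ means all coefficients of the difference are divisible by $N$. *)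

theory Defs
  imports "HOL-Computational_Algebra.Formal_Power_Series" "HOL-Number_Theory.Cong"
begin

definition u :: "nat \<Rightarrow> int" where
  "u r = int (fact (6*r) div (fact (3*r) * (fact r)^3))"

definition U :: "int fps" where
  "U = Abs_fps u"

definition V :: "int fps" where
  "V = Abs_fps (\<lambda>r. (6 * int r + 1) * u r)"

definition fps_subst_pow :: "nat \<Rightarrow> 'a::zero fps \<Rightarrow> 'a fps" where
  "fps_subst_pow p f = Abs_fps (\<lambda>n. if p dvd n then fps_nth f (n div p) else 0)"

definition fps_cong :: "int fps \<Rightarrow> int fps \<Rightarrow> int \<Rightarrow> bool" where
  "fps_cong A B N \<longleftrightarrow> (\<forall>n. [fps_nth A n = fps_nth B n] (mod N))"

end

theory Submission
  imports Defs "HOL-Computational_Algebra.Primes"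
begin

(* Write r = p b + a with a < p. By Lucas' theorem each of the binomial coefficients
   (2r choose r), (3r choose r), (6r choose 3r) factors modulo p along this digit split as
   long as no carry occurs, i.e. when 6a < p; then u (p b + a) = u a * u b (mod p), which
   is the coefficientwise content of both congruences (for V also 6r + 1 = 6a + 1 mod p).
   If 6a >= p, the first of 2a, 3a, 6a to reach p produces a carry whose low digit is
   smaller than that of r (resp. 3r), so one factor vanishes mod p. For p <= 5 every digit
   a > 0 has 6a >= p, and u (p b) = u b (mod p) gives u r = 0 by induction. *)

(* Pascal's rule for the right-hand side of Lucas' congruence; it is exact except when
   n mod p = p - 1 and k mod p < p - 1, where the defect is a multiple of p choose (k mod p + 1). *)
lemma lucas_pascal_cong:
  fixes p :: nat
  assumes "prime p"
  defines "L \<equiv> \<lambda>n k. (n div p choose k div p) * (n mod p choose k mod p)"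
  shows "[L (Suc n) (Suc k) = L n k + L n (Suc k)] (mod p)"
proof -
  have "p > 1" using assms(1) prime_gt_1_nat by blast
  define a i b j where "a = n div p" and "i = n mod p" and "b = k div p" and "j = k mod p"
  have "i < p" "j < p" using \<open>p > 1\<close> by (simp_all add: i_def j_def)
  have L_n: "L n k = (a choose b) * (i choose j)" "L n (Suc k) =
      (if Suc j = p then (a choose Suc b) * (i choose 0) else (a choose b) * (i choose Suc j))"
    by (simp_all add: L_def a_def i_def b_def j_def div_Suc mod_Suc)
  have L_Suc_n: "L (Suc n) (Suc k) =
      (if Suc i = p
       then (Suc a choose (if Suc j = p then Suc b else b)) * (0 choose (if Suc j = p then 0 else Suc j))
       else (a choose (if Suc j = p then Suc b else b)) * (Suc i choose (if Suc j = p then 0 else Suc j)))"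
    by (simp add: L_def a_def i_def b_def j_def div_Suc mod_Suc)
  show ?thesis
  proof (cases "Suc i = p")
    case False
    then show ?thesis
      using \<open>i < p\<close> unfolding L_n L_Suc_n by (auto simp: algebra_simps binomial_eq_0)
  next
    case True
    show ?thesis
    proof (cases "Suc j = p")
      case True
      then have "i = j" using \<open>Suc i = p\<close> by simp
      then show ?thesis using True unfolding L_n L_Suc_n by simp
    next
      case False
      have "p dvd (p choose Suc j)"
        using dvd_choose_prime[of "Suc j" p] False \<open>j < p\<close> assms(1) by auto
      then have "p dvd L n k + L n (Suc k)"
        using True False unfolding L_n by (auto simp: distrib_left[symmetric])
      then show ?thesis
        using True False unfolding L_Suc_n by (simp add: cong_0_iff cong_sym_eq[of 0])
    qed
  qed
qed

theorem binomial_cong_lucas: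
  fixes p :: nat
  assumes "prime p"
  shows "[n choose k = (n div p choose k div p) * (n mod p choose k mod p)] (mod p)"
proof (induction n arbitrary: k)
  case 0
  show ?case
  proof (cases "k = 0")
    case False
    then have "k div p \<noteq> 0 \<or> k mod p \<noteq> 0"
      using div_mult_mod_eq[of k p] by auto
    then show ?thesis using False by (auto simp: binomial_eq_0)
  qed simp
next
  case (Suc n)
  show ?case
  proof (cases k)
    case (Suc k')
    have "[Suc n choose Suc k' = (n div p choose k' div p) * (n mod p choose k' mod p)
            + (n div p choose Suc k' div p) * (n mod p choose Suc k' mod p)] (mod p)"
      unfolding binomial_Suc_Suc by (intro cong_add Suc.IH)
    with lucas_pascal_cong[OF assms] show ?thesis
      unfolding Suc using cong_sym cong_trans by blast
  qed simp
qed

corollary binomial_cong_lucas_digits: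
  fixes p :: nat
  assumes "prime p" "i < p" "j < p"
  shows "[(p * a + i) choose (p * b + j) = (a choose b) * (i choose j)] (mod p)"
  using binomial_cong_lucas[OF assms(1), of "p * a + i" "p * b + j"] assms(2,3) by simp

corollary prime_dvd_choose_digits:
  fixes p :: nat
  assumes "prime p" "i < j" "j < p"
  shows "p dvd ((p * a + i) choose (p * b + j))"
  using binomial_cong_lucas_digits[OF assms(1), of i j a b] assms(2,3)
  by (simp add: cong_0_iff binomial_eq_0)

lemma binomial_mult_cong_lucas:
  fixes p :: nat
  assumes "prime p" "c * i < p" "d \<le> c"
  shows "[c * (p * a + i) choose d * (p * a + i) = (c * a choose d * a) * (c * i choose d * i)] (mod p)"
proof -
  have "d * i < p" using assms(2) mult_le_mono1[OF assms(3), of i] by linarith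
  then show ?thesis
    using binomial_cong_lucas_digits[OF assms(1) assms(2), of "d * i" "c * a" "d * a"]
    by (simp add: algebra_simps)
qed

lemma u_eq_binomials: "u r = int ((2 * r choose r) * (3 * r choose r) * (6 * r choose 3 * r))"
proof -
  have f2: "fact (2 * r) = fact r * fact r * (2 * r choose r)"
    using binomial_fact_lemma[of r "2 * r"] by (simp add: mult_2)
  have f3: "fact (3 * r) = fact r * fact (2 * r) * (3 * r choose r)"
    using binomial_fact_lemma[of r "3 * r"] by simp
  have f6: "fact (6 * r) = fact (3 * r) * fact (3 * r) * (6 * r choose 3 * r)"
    using binomial_fact_lemma[of "3 * r" "6 * r"] by simp
  have "(fact (6 * r) :: nat)
      = fact (3 * r) * fact r ^ 3 * ((2 * r choose r) * (3 * r choose r) * (6 * r choose 3 * r))"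
    unfolding f6 by (subst (2) f3, unfold f2) (simp add: power3_eq_cube mult_ac)
  then show ?thesis
    unfolding u_def by simp
qed

lemma u_cong_mult:
  fixes p :: nat
  assumes "prime p" "6 * i < p"
  shows "[u (p * a + i) = u i * u a] (mod int p)"
proof -
  let ?r = "p * a + i"
  have "[2 * ?r choose ?r = (2 * a choose a) * (2 * i choose i)] (mod p)"
    using binomial_mult_cong_lucas[OF assms(1), of 2 i 1 a] assms(2) by simp
  moreover have "[3 * ?r choose ?r = (3 * a choose a) * (3 * i choose i)] (mod p)"
    using binomial_mult_cong_lucas[OF assms(1), of 3 i 1 a] assms(2) by simp
  moreover have "[6 * ?r choose 3 * ?r = (6 * a choose 3 * a) * (6 * i choose 3 * i)] (mod p)"
    using binomial_mult_cong_lucas[OF assms(1), of 6 i 3 a] assms(2) by simp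
  ultimately have "[(2 * ?r choose ?r) * (3 * ?r choose ?r) * (6 * ?r choose 3 * ?r)
      = ((2 * a choose a) * (2 * i choose i)) * ((3 * a choose a) * (3 * i choose i))
        * ((6 * a choose 3 * a) * (6 * i choose 3 * i))] (mod p)"
    by (intro cong_mult)
  then show ?thesis
    unfolding u_eq_binomials of_nat_mult[symmetric] cong_int_iff by (simp add: mult_ac)
qed

(* The first of 2i, 3i, 6i to reach p causes a carry whose low digit falls below that of
   r (resp. 3r). *)
lemma u_cong_zero:
  fixes p :: nat
  assumes "prime p" "i < p" "p \<le> 6 * i"
  shows "[u (p * a + i) = 0] (mod int p)"
proof -
  let ?r = "p * a + i"
  consider "p \<le> 2 * i" | "2 * i < p" "p \<le> 3 * i" | "3 * i < p" using assms(3) by linarith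
  then have "p dvd (2 * ?r choose ?r) * (3 * ?r choose ?r) * (6 * ?r choose 3 * ?r)"
  proof cases
    case 1
    have "2 * ?r = p * (2 * a + 1) + (2 * i - p)" using 1 by simp
    moreover have "p dvd (p * (2 * a + 1) + (2 * i - p)) choose ?r"
      by (rule prime_dvd_choose_digits) (use 1 assms in auto)
    ultimately have "p dvd 2 * ?r choose ?r" by (simp only:)
    then show ?thesis by (intro dvd_mult2)
  next
    case 2
    have "3 * ?r = p * (3 * a + 1) + (3 * i - p)" using 2 by simp
    moreover have "p dvd (p * (3 * a + 1) + (3 * i - p)) choose ?r"
      by (rule prime_dvd_choose_digits) (use 2 assms in auto)
    ultimately have "p dvd 3 * ?r choose ?r" by (simp only:)
    then show ?thesis by (intro dvd_mult2 dvd_mult)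
  next
    case 3
    have "6 * ?r = p * (6 * a + 1) + (6 * i - p)" "3 * ?r = p * (3 * a) + 3 * i"
      using 3 assms(3) by simp_all
    moreover have "p dvd (p * (6 * a + 1) + (6 * i - p)) choose (p * (3 * a) + 3 * i)"
      by (rule prime_dvd_choose_digits) (use 3 assms in auto)
    ultimately have "p dvd 6 * ?r choose 3 * ?r" by (simp only:)
    then show ?thesis by (intro dvd_mult)
  qed
  then show ?thesis
    unfolding u_eq_binomials cong_0_iff int_dvd_int_iff .
qed

lemma u_cong_digits:
  fixes p :: nat
  assumes "prime p"
  shows "[u r = (if 6 * (r mod p) < p then u (r mod p) * u (r div p) else 0)] (mod int p)"
proof -
  have "r mod p < p" using assms prime_gt_0_nat by simp
  then show ?thesis
    using u_cong_mult[OF assms, of "r mod p" "r div p"] u_cong_zero[OF assms, of "r mod p" "r div p"]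
    by (simp add: not_less)
qed

lemma u_cong_0_prime_lt_6:
  fixes p :: nat
  assumes "prime p" "p < 6" "r \<ge> 1"
  shows "[u r = 0] (mod int p)"
  using assms(3)
proof (induction r rule: less_induct)
  case (less r)
  have "p > 1" using assms(1) prime_gt_1_nat by blast
  show ?case
  proof (cases "r mod p = 0")
    case False
    then show ?thesis using u_cong_digits[OF assms(1), of r] assms(2) by simp
  next
    case True
    then have "r = p * (r div p)" using mult_div_mod_eq[of p r] by simp
    then have "1 \<le> r div p" using less.prems by (cases "r div p = 0") auto
    moreover have "r div p < r" using less.prems \<open>p > 1\<close> by simp
    ultimately have "[u (r div p) = 0] (mod int p)" using less.IH by blast
    moreover have "u 0 = 1" by (simp add: u_def)
    ultimately show ?thesis using u_cong_digits[OF assms(1), of r] True \<open>p > 1\<close>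
      by (auto elim: cong_trans)
  qed
qed

lemma fps_X_power_mult_subst_pow_nth:
  fixes f :: "'a::comm_semiring_1 fps"
  assumes "m < p"
  shows "fps_nth (fps_X ^ m * fps_subst_pow p f) n = (if n mod p = m then fps_nth f (n div p) else 0)"
proof -
  have "(\<not> n < m \<and> p dvd n - m) \<longleftrightarrow> n mod p = m"
  proof
    assume "\<not> n < m \<and> p dvd n - m"
    then obtain k where "n = p * k + m" by (metis dvdE le_add_diff_inverse2 not_less)
    then show "n mod p = m" using assms by simp
  next
    assume "n mod p = m"
    then show "\<not> n < m \<and> p dvd n - m"
      using mod_less_eq_dividend[of n p] minus_mod_eq_mult_div[of n p] by auto
  qed
  moreover have "n mod p = m \<Longrightarrow> (n - m) div p = n div p"
    using assms minus_mod_eq_mult_div[of n p] by auto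
  ultimately show ?thesis
    by (auto simp: fps_X_power_mult_nth fps_subst_pow_def)
qed

lemma fps_sum_monom_mult_subst_pow_nth:
  fixes c :: "nat \<Rightarrow> 'a::comm_semiring_1" and f :: "'a fps"
  assumes "d < p"
  shows "fps_nth ((\<Sum>m = 0..d. fps_const (c m) * fps_X ^ m) * fps_subst_pow p f) n
       = (if n mod p \<le> d then c (n mod p) * fps_nth f (n div p) else 0)"
proof -
  have "fps_nth ((\<Sum>m = 0..d. fps_const (c m) * fps_X ^ m) * fps_subst_pow p f) n
      = (\<Sum>m = 0..d. c m * fps_nth (fps_X ^ m * fps_subst_pow p f) n)"
    by (simp add: sum_distrib_right fps_sum_nth mult.assoc)
  also have "\<dots> = (\<Sum>m = 0..d. if n mod p = m then c m * fps_nth f (n div p) else 0)"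
    using assms by (intro sum.cong) (simp_all add: fps_X_power_mult_subst_pow_nth)
  also have "\<dots> = (if n mod p \<le> d then c (n mod p) * fps_nth f (n div p) else 0)"
    by (simp add: sum.delta)
  finally show ?thesis .
qed

lemma prime_le_div_6_iff:
  fixes p :: nat
  assumes "prime p"
  shows "a \<le> p div 6 \<longleftrightarrow> 6 * a < p"
proof -
  have "p \<noteq> 6 * a"
  proof
    assume "p = 6 * a"
    then have "2 dvd p" by presburger
    then have "p = 2" using assms by (auto simp: prime_nat_iff)
    with \<open>p = 6 * a\<close> show False by simp
  qed
  then show ?thesis by auto
qed

theorem proposition3p1:
  fixes p :: nat
  assumes "prime p"
  shows "fps_cong U ((\<Sum>m = 0..p div 6. fps_const (u m) * fps_X ^ m) * fps_subst_pow p U) (int p)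
       \<and> fps_cong V ((\<Sum>m = 0..p div 6. fps_const ((6 * int m + 1) * u m) * fps_X ^ m) * fps_subst_pow p U) (int p)
       \<and> (p \<in> {2, 3, 5} \<longrightarrow> (\<forall>r\<ge>1. [u r = 0] (mod int p)))"
proof -
  have "p div 6 < p" using assms prime_gt_0_nat by simp
  then have coeff: "fps_nth ((\<Sum>m = 0..p div 6. fps_const (c m) * fps_X ^ m) * fps_subst_pow p U) n
      = (if 6 * (n mod p) < p then c (n mod p) * u (n div p) else 0)" for c n
    using fps_sum_monom_mult_subst_pow_nth[of "p div 6" p c U n] prime_le_div_6_iff[OF assms]
    by (simp add: U_def)
  have weight_cong: "[6 * int n + 1 = 6 * int (n mod p) + 1] (mod int p)" for n
    by (intro cong_add cong_mult cong_refl) (simp add: cong_int_iff)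
  have weighted_u_cong: "[(6 * int n + 1) * u n = (if 6 * (n mod p) < p
      then (6 * int (n mod p) + 1) * u (n mod p) * u (n div p) else 0)] (mod int p)" for n
    using cong_mult[OF weight_cong u_cong_digits[OF assms], of n n]
    by (simp add: mult.assoc split: if_splits)
  have "p \<in> {2, 3, 5} \<longrightarrow> (\<forall>r\<ge>1. [u r = 0] (mod int p))"
    using u_cong_0_prime_lt_6[OF assms] by auto
  then show ?thesis
    unfolding fps_cong_def coeff using u_cong_digits[OF assms] weighted_u_cong
    by (simp add: U_def V_def)
qed

end
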